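(* Let $d>1$ be an integer and $\mu>0$ an integer. For every relation $R\in\{\le,<,\ge,>,=,\neq\}$ there is a B\"uchi automaton over $\{0,\dots,\mu\}\times\{0,\dots,\mu\}$ accepting a pair $(A,B)$ of sequences in $\{0,\dots,\mu\}^\omega$ (read synchronously) if and only if $\mathrm{DS}(A,d)\,R\,\mathrm{DS}(B,d)$; i.e. the discounted-sum comparator for integer discount factors is $\omega$-regular for all relations.
   Context: $\mathrm{DS}(A,d)=\sum_{i\ge0}A[i]/d^i$. *)

theory Defs
  imports Complex_Main
begin

definition DS :: "(nat \<Rightarrow> nat) \<Rightarrow> nat \<Rightarrow> real" where
  "DS A d = (\<Sum>i. real (A i) / real d ^ i)"

record ('q, 'a) buchi =
  alphabet :: "'a set"
  states :: "'q set"
  initial :: "'q set"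
  trans :: "('q \<times> 'a \<times> 'q) set"
  accepting :: "'q set"

definition wf_buchi :: "('q, 'a) buchi \<Rightarrow> bool" where
  "wf_buchi M \<longleftrightarrow> finite (alphabet M) \<and> finite (states M) \<and>
     initial M \<subseteq> states M \<and> accepting M \<subseteq> states M \<and>
     trans M \<subseteq> states M \<times> alphabet M \<times> states M"

definition buchi_accepts :: "('q, 'a) buchi \<Rightarrow> (nat \<Rightarrow> 'a) \<Rightarrow> bool" where
  "buchi_accepts M w \<longleftrightarrow> (\<exists>r :: nat \<Rightarrow> 'q.
     r 0 \<in> initial M \<and> (\<forall>i. (r i, w i, r (Suc i)) \<in> trans M) \<and>
     (\<exists>\<^sub>\<infinity>i. r i \<in> accepting M))"

end

theory Submission
  imports Defs "HOL-Library.Infinite_Set" "HOL-Library.Nat_Bijection"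
begin

text \<open>
  Reading the digits synchronously, track the integer gap
  X(n) = d^n * (\<Sum>i<n. (A i - B i) / d^i), i.e. X(0) = 0 and X(n+1) = d * (X(n) + A n - B n).
  Then d^n * (DS A d - DS B d) = X(n) + T(n), where the discounted tail T(n) satisfies
  |T(n)| \<le> 2\<mu> because d \<ge> 2. Once |X(n)| > 2\<mu>, the gap keeps its sign and stays beyond 2\<mu>
  forever. If DS A d \<noteq> DS B d this must happen, since d^n * |DS A d - DS B d| is unbounded;
  if they are equal, |X(n)| = |T(n)| \<le> 2\<mu> for all n. So a deterministic automaton that
  follows X(n) inside [-2\<mu>, 2\<mu>] and moves to one of two absorbing states \<plusminus>(2\<mu>+1) on
  escaping eventually displays the sign of DS A d - DS B d, and each of the six relations
  is a function of that sign.
\<close>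

primrec det_run :: "('q \<Rightarrow> 'a \<Rightarrow> 'q) \<Rightarrow> 'q \<Rightarrow> (nat \<Rightarrow> 'a) \<Rightarrow> nat \<Rightarrow> 'q" where
  "det_run f q w 0 = q"
| "det_run f q w (Suc n) = f (det_run f q w n) (w n)"

definition det_buchi ::
    "'a set \<Rightarrow> 'q set \<Rightarrow> 'q \<Rightarrow> ('q \<Rightarrow> 'a \<Rightarrow> 'q) \<Rightarrow> 'q set \<Rightarrow> ('q, 'a) buchi" where
  "det_buchi \<Sigma> S q\<^sub>0 f F =
     \<lparr>alphabet = \<Sigma>, states = S, initial = {q\<^sub>0},
      trans = {(p, a, f p a) | p a. p \<in> S \<and> a \<in> \<Sigma>}, accepting = F\<rparr>"

lemma wf_det_buchi:
  assumes "finite \<Sigma>" "finite S" "q\<^sub>0 \<in> S" "F \<subseteq> S" "\<And>p a. p \<in> S \<Longrightarrow> a \<in> \<Sigma> \<Longrightarrow> f p a \<in> S"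
  shows "wf_buchi (det_buchi \<Sigma> S q\<^sub>0 f F)"
  using assms by (auto simp: wf_buchi_def det_buchi_def)

lemma buchi_accepts_det_buchi:
  assumes "q\<^sub>0 \<in> S" "\<And>p a. p \<in> S \<Longrightarrow> a \<in> \<Sigma> \<Longrightarrow> f p a \<in> S" "\<And>i. w i \<in> \<Sigma>"
  shows "buchi_accepts (det_buchi \<Sigma> S q\<^sub>0 f F) w \<longleftrightarrow> (\<exists>\<^sub>\<infinity>i. det_run f q\<^sub>0 w i \<in> F)"
proof
  assume "buchi_accepts (det_buchi \<Sigma> S q\<^sub>0 f F) w"
  then obtain r where r0: "r 0 = q\<^sub>0" and step: "\<And>i. r (Suc i) = f (r i) (w i)"
    and acc: "\<exists>\<^sub>\<infinity>i. r i \<in> F"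
    by (auto simp: buchi_accepts_def det_buchi_def)
  have "r i = det_run f q\<^sub>0 w i" for i
    by (induction i) (simp_all add: r0 step)
  with acc show "\<exists>\<^sub>\<infinity>i. det_run f q\<^sub>0 w i \<in> F"
    by simp
next
  assume acc: "\<exists>\<^sub>\<infinity>i. det_run f q\<^sub>0 w i \<in> F"
  have "det_run f q\<^sub>0 w i \<in> S" for i
    by (induction i) (simp_all add: assms)
  with acc assms(3) show "buchi_accepts (det_buchi \<Sigma> S q\<^sub>0 f F) w"
    unfolding buchi_accepts_def det_buchi_def by (intro exI[of _ "det_run f q\<^sub>0 w"]) auto
qed

definition map_buchi :: "('q \<Rightarrow> 'p) \<Rightarrow> ('q, 'a) buchi \<Rightarrow> ('p, 'a) buchi" where
  "map_buchi h M =
     \<lparr>alphabet = alphabet M, states = h ` states M, initial = h ` initial M,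
      trans = (\<lambda>(p, a, q). (h p, a, h q)) ` trans M, accepting = h ` accepting M\<rparr>"

lemma wf_map_buchi: "wf_buchi M \<Longrightarrow> wf_buchi (map_buchi h M)"
  by (auto simp: wf_buchi_def map_buchi_def)

lemma buchi_accepts_map_buchi:
  assumes "inj h"
  shows "buchi_accepts (map_buchi h M) w \<longleftrightarrow> buchi_accepts M w"
proof
  assume "buchi_accepts (map_buchi h M) w"
  then obtain r where r0: "r 0 \<in> h ` initial M"
    and step: "\<And>i. (r i, w i, r (Suc i)) \<in> (\<lambda>(p, a, q). (h p, a, h q)) ` trans M"
    and acc: "\<exists>\<^sub>\<infinity>i. r i \<in> h ` accepting M"
    by (auto simp: buchi_accepts_def map_buchi_def)
  have "(inv h (r i), w i, inv h (r (Suc i))) \<in> trans M" for i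
    using step[of i] assms by auto
  moreover have "inv h (r 0) \<in> initial M"
    using r0 assms by auto
  moreover have "\<exists>\<^sub>\<infinity>i. inv h (r i) \<in> accepting M"
    using acc by (rule INFM_mono) (use assms in auto)
  ultimately show "buchi_accepts M w"
    unfolding buchi_accepts_def by (intro exI[of _ "\<lambda>i. inv h (r i)"]) blast
next
  assume "buchi_accepts M w"
  then obtain r where r0: "r 0 \<in> initial M" and step: "\<And>i. (r i, w i, r (Suc i)) \<in> trans M"
    and acc: "\<exists>\<^sub>\<infinity>i. r i \<in> accepting M"
    by (auto simp: buchi_accepts_def)
  have "(h (r i), w i, h (r (Suc i))) \<in> (\<lambda>(p, a, q). (h p, a, h q)) ` trans M" for i
    using step[of i] by force
  with r0 acc show "buchi_accepts (map_buchi h M) w"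
    unfolding buchi_accepts_def map_buchi_def
    by (intro exI[of _ "h \<circ> r"]) (auto elim!: INFM_mono)
qed

lemma INFM_eventually_const:
  fixes s :: "nat \<Rightarrow> 'a"
  assumes "\<forall>\<^sub>\<infinity>n. s n = v"
  shows "(\<exists>\<^sub>\<infinity>n. P (s n)) \<longleftrightarrow> P v"
  using frequently_cong[OF assms, of "\<lambda>n. P (s n)" "\<lambda>n. P v"] by simp

lemma weighted_geometric_suminf_bound:
  fixes d b :: real and f :: "nat \<Rightarrow> real"
  assumes d: "2 \<le> d" and f: "\<And>i. \<bar>f i\<bar> \<le> b"
  shows "summable (\<lambda>i. f i / d ^ i)" and "\<bar>\<Sum>i. f i / d ^ i\<bar> \<le> 2 * b"
proof -
  have le: "\<bar>f i / d ^ i\<bar> \<le> b * (1 / 2) ^ i" for i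
  proof -
    have "\<bar>f i\<bar> / d ^ i \<le> b / d ^ i"
      using f d by (simp add: divide_right_mono)
    also have "\<dots> \<le> b / 2 ^ i"
      using d order_trans[OF abs_ge_zero f] by (intro divide_left_mono power_mono) auto
    finally show ?thesis
      using d by (simp add: abs_divide power_one_over)
  qed
  have geom: "summable (\<lambda>i. b * (1 / 2 :: real) ^ i)"
    by (simp add: summable_geometric)
  have abs_summ: "summable (\<lambda>i. \<bar>f i / d ^ i\<bar>)"
    by (rule summable_comparison_test[OF _ geom]) (use le in auto)
  then show "summable (\<lambda>i. f i / d ^ i)"
    by (rule summable_rabs_cancel)
  have "\<bar>\<Sum>i. f i / d ^ i\<bar> \<le> (\<Sum>i. \<bar>f i / d ^ i\<bar>)"
    using abs_summ by (rule summable_rabs)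
  also have "\<dots> \<le> (\<Sum>i. b * (1 / 2) ^ i)"
    using le abs_summ geom by (rule suminf_le)
  also have "\<dots> = 2 * b"
    by (simp add: suminf_mult suminf_geometric)
  finally show "\<bar>\<Sum>i. f i / d ^ i\<bar> \<le> 2 * b" .
qed

lemma summable_DS_terms:
  assumes "1 < d" "\<And>i. A i \<le> \<mu>"
  shows "summable (\<lambda>i. real (A i) / real d ^ i)"
  using weighted_geometric_suminf_bound(1)[of "real d" "\<lambda>i. real (A i)" "real \<mu>"] assms by simp

definition ds_tail :: "(nat \<Rightarrow> nat) \<Rightarrow> (nat \<Rightarrow> nat) \<Rightarrow> nat \<Rightarrow> nat \<Rightarrow> real" where
  "ds_tail A B d n = (\<Sum>j. (real (A (n + j)) - real (B (n + j))) / real d ^ j)"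

fun gap :: "nat \<Rightarrow> (nat \<Rightarrow> nat) \<Rightarrow> (nat \<Rightarrow> nat) \<Rightarrow> nat \<Rightarrow> int" where
  "gap d A B 0 = 0"
| "gap d A B (Suc n) = int d * (gap d A B n + int (A n) - int (B n))"

lemma escape_above_step:
  fixes x :: int
  assumes "2 * int \<mu> < x" "b \<le> \<mu>" "1 < d"
  shows "2 * int \<mu> < int d * (x + int a - int b)"
proof -
  define y where "y = x + int a - int b"
  have "int \<mu> + 1 \<le> y"
    using assms by (simp add: y_def)
  moreover have "2 * y \<le> int d * y"
    using assms calculation by (intro mult_right_mono) auto
  ultimately show ?thesis
    unfolding y_def[symmetric] by linarith
qed

lemma escape_below_step:
  fixes x :: int
  assumes "x < - 2 * int \<mu>" "a \<le> \<mu>" "1 < d"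
  shows "int d * (x + int a - int b) < - 2 * int \<mu>"
proof -
  define y where "y = x + int a - int b"
  have "y \<le> - int \<mu> - 1"
    using assms by (simp add: y_def)
  moreover have "int d * y \<le> 2 * y"
    using assms calculation by (intro mult_right_mono_neg) auto
  ultimately show ?thesis
    unfolding y_def[symmetric] by linarith
qed

definition clamp :: "int \<Rightarrow> int \<Rightarrow> int" where
  "clamp c x = max (- c) (min c x)"

definition escape_sign :: "nat \<Rightarrow> int \<Rightarrow> real" where
  "escape_sign \<mu> x = (if 2 * int \<mu> < x then 1 else if x < - 2 * int \<mu> then - 1 else 0)"

lemma escape_sign_clamp: "escape_sign \<mu> (clamp (2 * int \<mu> + 1) x) = escape_sign \<mu> x"
  by (simp add: escape_sign_def clamp_def)

definition comparator_states :: "nat \<Rightarrow> int set" where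
  "comparator_states \<mu> = {- (2 * int \<mu> + 1) .. 2 * int \<mu> + 1}"

lemma clamp_in_comparator_states: "clamp (2 * int \<mu> + 1) x \<in> comparator_states \<mu>"
  by (simp add: clamp_def comparator_states_def)

definition comparator_step :: "nat \<Rightarrow> nat \<Rightarrow> int \<Rightarrow> nat \<times> nat \<Rightarrow> int" where
  "comparator_step d \<mu> x ab =
     (if 2 * int \<mu> < \<bar>x\<bar> then x
      else clamp (2 * int \<mu> + 1) (int d * (x + int (fst ab) - int (snd ab))))"

lemma comparator_step_in_states:
  "x \<in> comparator_states \<mu> \<Longrightarrow> comparator_step d \<mu> x ab \<in> comparator_states \<mu>"
  by (simp add: comparator_step_def clamp_in_comparator_states)

definition comparator :: "nat \<Rightarrow> nat \<Rightarrow> (real \<Rightarrow> real \<Rightarrow> bool) \<Rightarrow> (int, nat \<times> nat) buchi" where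
  "comparator d \<mu> R =
     det_buchi ({0..\<mu>} \<times> {0..\<mu>}) (comparator_states \<mu>) 0 (comparator_step d \<mu>)
       {x \<in> comparator_states \<mu>. R (escape_sign \<mu> x) 0}"

lemma wf_comparator: "wf_buchi (comparator d \<mu> R)"
  unfolding comparator_def
  by (rule wf_det_buchi) (auto simp: comparator_step_in_states, auto simp: comparator_states_def)

context
  fixes d \<mu> :: nat and A B :: "nat \<Rightarrow> nat"
  assumes discount: "1 < d" and digits: "\<forall>i. A i \<le> \<mu> \<and> B i \<le> \<mu>"
begin

lemma ds_tail_summable: "summable (\<lambda>j. (real (A (n + j)) - real (B (n + j))) / real d ^ j)"
  and abs_ds_tail_le: "\<bar>ds_tail A B d n\<bar> \<le> 2 * real \<mu>"
proof -
  have "\<bar>real (A (n + j)) - real (B (n + j))\<bar> \<le> real \<mu>" for j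
    using digits[rule_format, of "n + j"] by (simp add: abs_le_iff)
  then show "summable (\<lambda>j. (real (A (n + j)) - real (B (n + j))) / real d ^ j)"
    and "\<bar>ds_tail A B d n\<bar> \<le> 2 * real \<mu>"
    using weighted_geometric_suminf_bound[of "real d" "\<lambda>j. real (A (n + j)) - real (B (n + j))"]
      discount by (auto simp: ds_tail_def)
qed

lemma ds_tail_0: "ds_tail A B d 0 = DS A d - DS B d"
proof -
  have "summable (\<lambda>i. real (A i) / real d ^ i)" "summable (\<lambda>i. real (B i) / real d ^ i)"
    using discount digits by (auto intro: summable_DS_terms)
  then show ?thesis
    by (simp add: DS_def ds_tail_def diff_divide_distrib suminf_diff)
qed

lemma ds_tail_Suc:
  "ds_tail A B d n = real (A n) - real (B n) + ds_tail A B d (Suc n) / real d"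
proof -
  have "ds_tail A B d n - (real (A n) - real (B n))
      = (\<Sum>j. (real (A (Suc n + j)) - real (B (Suc n + j))) / real d ^ j / real d)"
    using suminf_split_head[OF ds_tail_summable[of n]] by (simp add: ds_tail_def mult.commute)
  also have "\<dots> = ds_tail A B d (Suc n) / real d"
    unfolding ds_tail_def by (rule suminf_divide[OF ds_tail_summable])
  finally show ?thesis
    by simp
qed

lemma scaled_DS_diff:
  "real d ^ n * (DS A d - DS B d) = real_of_int (gap d A B n) + ds_tail A B d n"
proof (induction n)
  case 0
  then show ?case
    by (simp add: ds_tail_0)
next
  case (Suc n)
  have "real d ^ Suc n * (DS A d - DS B d) = real d * (real_of_int (gap d A B n) + ds_tail A B d n)"
    using Suc by simp
  also have "\<dots> = real_of_int (gap d A B (Suc n)) + ds_tail A B d (Suc n)"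
    using discount by (subst ds_tail_Suc) (simp add: field_simps)
  finally show ?case .
qed

lemma gap_escaped_persists:
  assumes "2 * int \<mu> < \<bar>gap d A B n\<bar>" "n \<le> m"
  shows "escape_sign \<mu> (gap d A B m) = escape_sign \<mu> (gap d A B n)"
proof (cases "0 < gap d A B n")
  case True
  have "2 * int \<mu> < gap d A B m"
    using \<open>n \<le> m\<close>
  proof (induction m rule: dec_induct)
    case (step k)
    then show ?case
      using escape_above_step[of \<mu> _ "B k" d "A k"] discount digits by simp
  qed (use assms True in simp)
  with assms True show ?thesis
    by (simp add: escape_sign_def)
next
  case False
  have "gap d A B m < - 2 * int \<mu>"
    using \<open>n \<le> m\<close>
  proof (induction m rule: dec_induct)
    case (step k)
    then show ?case
      using escape_below_step[of _ \<mu> "A k" d "B k"] discount digits by simp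
  qed (use assms False in simp)
  with assms False show ?thesis
    by (simp add: escape_sign_def)
qed

lemma abs_gap_le_if_DS_eq:
  assumes "DS A d = DS B d"
  shows "\<bar>gap d A B n\<bar> \<le> 2 * int \<mu>"
proof -
  have "real_of_int \<bar>gap d A B n\<bar> \<le> real_of_int (2 * int \<mu>)"
    using scaled_DS_diff[of n] abs_ds_tail_le[of n] assms by simp
  then show ?thesis
    by (simp only: of_int_le_iff)
qed

lemma gap_escapes_if_DS_neq:
  assumes "DS A d \<noteq> DS B d"
  obtains n where "2 * int \<mu> < \<bar>gap d A B n\<bar>"
    and "escape_sign \<mu> (gap d A B n) = sgn (DS A d - DS B d)"
proof -
  define D where "D = DS A d - DS B d"
  have "\<bar>D\<bar> > 0"
    using assms by (simp add: D_def)
  obtain n where "4 * real \<mu> / \<bar>D\<bar> < real d ^ n"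
    using real_arch_pow discount by (metis of_nat_1 of_nat_less_iff)
  then have far: "4 * real \<mu> < real d ^ n * \<bar>D\<bar>"
    using \<open>\<bar>D\<bar> > 0\<close> by (simp add: pos_divide_less_eq)
  have gap_n: "real d ^ n * D = real_of_int (gap d A B n) + ds_tail A B d n"
    using scaled_DS_diff by (simp add: D_def)
  consider "0 < D" | "D < 0"
    using \<open>\<bar>D\<bar> > 0\<close> by linarith
  then show ?thesis
  proof cases
    case 1
    then have "2 * real \<mu> < real_of_int (gap d A B n)"
      using far gap_n abs_ds_tail_le[of n] by (simp add: abs_le_iff)
    then have "2 * int \<mu> < gap d A B n"
      by linarith
    with 1 show ?thesis
      by (intro that[of n]) (simp_all add: escape_sign_def D_def[symmetric])
  next
    case 2
    then have "real_of_int (gap d A B n) < - 2 * real \<mu>"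
      using far gap_n abs_ds_tail_le[of n] by (simp add: abs_le_iff)
    then have "gap d A B n < - 2 * int \<mu>"
      by linarith
    with 2 show ?thesis
      by (intro that[of n]) (simp_all add: escape_sign_def D_def[symmetric])
  qed
qed

lemma eventually_escape_sign_gap:
  "\<forall>\<^sub>\<infinity>n. escape_sign \<mu> (gap d A B n) = sgn (DS A d - DS B d)"
proof (cases "DS A d = DS B d")
  case True
  then have "escape_sign \<mu> (gap d A B n) = sgn (DS A d - DS B d)" for n
    using abs_gap_le_if_DS_eq[of n] by (auto simp: escape_sign_def abs_le_iff)
  then show ?thesis
    by (simp add: always_eventually)
next
  case False
  then obtain n where escaped: "2 * int \<mu> < \<bar>gap d A B n\<bar>"
    and sign: "escape_sign \<mu> (gap d A B n) = sgn (DS A d - DS B d)"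
    by (rule gap_escapes_if_DS_neq)
  have "escape_sign \<mu> (gap d A B m) = sgn (DS A d - DS B d)" if "n \<le> m" for m
    using gap_escaped_persists[OF escaped that] sign by simp
  then show ?thesis
    by (auto simp: cofinite_eq_sequentially eventually_sequentially)
qed

lemma det_run_comparator_step:
  "det_run (comparator_step d \<mu>) 0 (\<lambda>i. (A i, B i)) n = clamp (2 * int \<mu> + 1) (gap d A B n)"
proof (induction n)
  case 0
  then show ?case
    by (simp add: clamp_def)
next
  case (Suc n)
  show ?case
  proof (cases "2 * int \<mu> < \<bar>gap d A B n\<bar>")
    case True
    then have "escape_sign \<mu> (gap d A B (Suc n)) = escape_sign \<mu> (gap d A B n)"
      by (intro gap_escaped_persists) auto
    with True Suc show ?thesis
      by (auto simp: comparator_step_def clamp_def escape_sign_def split: if_splits)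
  next
    case False
    with Suc show ?thesis
      by (simp add: comparator_step_def clamp_def)
  qed
qed

lemma buchi_accepts_comparator:
  "buchi_accepts (comparator d \<mu> R) (\<lambda>i. (A i, B i)) \<longleftrightarrow> R (sgn (DS A d - DS B d)) 0"
proof -
  have "buchi_accepts (comparator d \<mu> R) (\<lambda>i. (A i, B i))
      \<longleftrightarrow> (\<exists>\<^sub>\<infinity>n. R (escape_sign \<mu> (gap d A B n)) 0)"
    unfolding comparator_def
    using digits
    by (subst buchi_accepts_det_buchi)
      (auto simp: comparator_step_in_states det_run_comparator_step escape_sign_clamp
        clamp_in_comparator_states, simp add: comparator_states_def)
  also have "\<dots> \<longleftrightarrow> R (sgn (DS A d - DS B d)) 0"
    using eventually_escape_sign_gap by (rule INFM_eventually_const)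
  finally show ?thesis .
qed

end

definition sign_invariant :: "(real \<Rightarrow> real \<Rightarrow> bool) \<Rightarrow> bool" where
  "sign_invariant R \<longleftrightarrow> (\<forall>x y. R x y \<longleftrightarrow> R (sgn (x - y)) 0)"

lemma DS_comparator_omega_regular:
  assumes "1 < d" "sign_invariant R"
  shows "\<exists>M :: (nat, nat \<times> nat) buchi.
           wf_buchi M \<and> alphabet M = {0..\<mu>} \<times> {0..\<mu>} \<and>
           (\<forall>A B :: nat \<Rightarrow> nat. (\<forall>i. A i \<le> \<mu> \<and> B i \<le> \<mu>) \<longrightarrow>
              (buchi_accepts M (\<lambda>i. (A i, B i)) \<longleftrightarrow> R (DS A d) (DS B d)))"
proof (intro exI conjI allI impI)
  let ?M = "map_buchi int_encode (comparator d \<mu> R)"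
  show "wf_buchi ?M"
    by (intro wf_map_buchi wf_comparator)
  show "alphabet ?M = {0..\<mu>} \<times> {0..\<mu>}"
    by (simp add: map_buchi_def comparator_def det_buchi_def)
  fix A B :: "nat \<Rightarrow> nat"
  assume "\<forall>i. A i \<le> \<mu> \<and> B i \<le> \<mu>"
  then show "buchi_accepts ?M (\<lambda>i. (A i, B i)) \<longleftrightarrow> R (DS A d) (DS B d)"
    using assms buchi_accepts_comparator
    by (simp add: buchi_accepts_map_buchi inj_int_encode sign_invariant_def)
qed

theorem corollary12:
  fixes d \<mu> :: nat
  assumes "d > 1" and "\<mu> > 0"
  shows "\<forall>R \<in> {(\<le>), (<), (\<ge>), (>), (=), (\<noteq>)} :: (real \<Rightarrow> real \<Rightarrow> bool) set.
           \<exists>M :: (nat, nat \<times> nat) buchi.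
             wf_buchi M \<and> alphabet M = {0..\<mu>} \<times> {0..\<mu>} \<and>
             (\<forall>A B :: nat \<Rightarrow> nat. (\<forall>i. A i \<le> \<mu> \<and> B i \<le> \<mu>) \<longrightarrow>
                (buchi_accepts M (\<lambda>i. (A i, B i)) \<longleftrightarrow> R (DS A d) (DS B d)))"
  by (intro ballI DS_comparator_omega_regular[OF assms(1)]) (auto simp: sign_invariant_def sgn_if)

end
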